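(* Under the standing AoI model, almost surely $$\lim_{\tau\to\infty}\frac1\tau\int_0^\tau\Delta(t)\,dt=\bar\Delta:=\frac{\rho\beta}{2(\alpha\rho+\beta)}\left(\frac{2}{\rho^2}+\frac{2\alpha}{\rho\beta}+\frac{\alpha^2+\alpha}{\beta^2}\right)+\frac{\alpha}{\beta}+T_{\rm tx}.$$ Equivalently, $\bar\Delta=\mathbb{E}[Q_k]/\mathbb{E}[T_k]$, where $Q_k=\tfrac12(\Delta_{p,k}^2-L_{k-1}^2)$ is the area under $\Delta$ on $[U_{k-1},U_k)$.
   Context: Standing AoI model. Fix $\alpha>0$, $\beta>0$, $\rho>0$ and a constant $T_{\rm tx}\ge0$. Let $(X_k)_{k\ge0}$ be i.i.d. Gamma$(\alpha,\beta)$ random variables, with density $f(x)=\frac{\beta^\alpha}{\Gamma(\alpha)}x^{\alpha-1}e^{-\beta x}$ for $x>0$; these are the consensus latencies. Let $(T_{{\rm int},k})_{k\ge1}$ be i.i.d. exponential random variables with rate $\rho$ (mean $1/\rho$), independent of $(X_k)$. For $k\ge1$ define: - the total latency $L_k=X_k+T_{\rm tx}$, with also $L_0=X_0+T_{\rm tx}$; - the inter-update time $T_k=X_k+T_{{\rm int},k}$; - the peak AoI $\Delta_{p,k}=X_{k-1}+T_{{\rm int},k}+L_k=X_{k-1}+X_k+T_{{\rm int},k}+T_{\rm tx}$. Let $U_0=0$ and $U_k=U_{k-1}+T_k$. The AoI process is $\Delta(t)=L_{k-1}+(t-U_{k-1})$ for $t\in[U_{k-1},U_k)$, $k\ge1$.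 It increases with slope 1 from $L_{k-1}$ to $\Delta_{p,k}$ on each update interval. *)

theory Defs
  imports "HOL-Probability.Probability"
begin

definition gamma_density :: "real \<Rightarrow> real \<Rightarrow> real \<Rightarrow> real" where
  "gamma_density a b x =
     (if 0 < x then b powr a / Gamma a * x powr (a - 1) * exp (- b * x) else 0)"

definition upd_time :: "(nat \<Rightarrow> real) \<Rightarrow> (nat \<Rightarrow> real) \<Rightarrow> nat \<Rightarrow> real" where
  "upd_time X Tint k = (\<Sum>i\<in>{1..k}. X i + Tint i)"

text \<open>AoI sample path: Delta(t) = L_{k-1} + (t - U_{k-1}) on [U_{k-1}, U_k), k >= 1,
  where L_j = X j + Ttx.\<close>
definition aoi :: "(nat \<Rightarrow> real) \<Rightarrow> (nat \<Rightarrow> real) \<Rightarrow> real \<Rightarrow> real \<Rightarrow> real" where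
  "aoi X Tint Ttx t =
     (let k = (THE k. 1 \<le> k \<and> upd_time X Tint (k - 1) \<le> t \<and> t < upd_time X Tint k)
      in (X (k - 1) + Ttx) + (t - upd_time X Tint (k - 1)))"

definition peak_aoi :: "(nat \<Rightarrow> real) \<Rightarrow> (nat \<Rightarrow> real) \<Rightarrow> real \<Rightarrow> nat \<Rightarrow> real" where
  "peak_aoi X Tint Ttx k = X (k - 1) + X k + Tint k + Ttx"

definition avg_aoi :: "real \<Rightarrow> real \<Rightarrow> real \<Rightarrow> real \<Rightarrow> real" where
  "avg_aoi a b r Ttx =
     r * b / (2 * (a * r + b)) * (2 / r^2 + 2 * a / (r * b) + (a^2 + a) / b^2) + a / b + Ttx"

end

(* Between updates the age grows with slope 1 from the total latency L_k, so the
   area under it over the (k+1)-st inter-update interval is Q = L_k T + T^2 / 2 with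
   T = X_(k+1) + Tint_(k+1), and the integral of the age up to time tau is squeezed
   between the partial sums of the Q's up to the two updates enclosing tau. The T's
   and the Q's have uniformly bounded second moments and, since Q only involves
   X_k, X_(k+1), Tint_(k+1), are uncorrelated at lag two; a Chebyshev estimate along
   the squares n = m^2 with Borel-Cantelli, plus monotonicity in between, gives the
   strong laws  sum T / n -> E T  and  sum Q / n -> E Q  almost surely. Hence the
   time average tends to E Q / E T, which the Gamma and exponential moments turn
   into the closed form. *)
theory Submission
  imports Defs "HOL-Library.Discrete_Functions"
begin

section \<open>Moments of the Gamma distribution\<close>

lemma borel_measurable_gamma_density [measurable]: "gamma_density a b \<in> borel_measurable borel"
  unfolding gamma_density_def by measurable

lemma nn_integral_gamma_density_power:
  fixes a b :: real
  assumes a: "a > 0" and b: "b > 0"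
  shows "(\<integral>\<^sup>+x. ennreal (gamma_density a b x * x ^ i) \<partial>lborel)
    = ennreal (Gamma (a + i) / (Gamma a * b ^ i))"
proof -
  define s where "s = a + real i"
  have "s > 0" using a by (simp add: s_def)
  then have Gamma_s: "(\<integral>\<^sup>+x. ennreal (x powr (s - 1) / exp x) * indicator {0..} x \<partial>lborel) = ennreal (Gamma s)"
    by (intro nn_integral_has_integral_lebesgue' Gamma_integral_real) simp
  define K where "K = b / (Gamma a * b ^ i)"
  have K: "K \<ge> 0" using a b by (simp add: K_def)
  have scaled: "ennreal (gamma_density a b (0 + (1/b) * x) * (0 + (1/b) * x) ^ i)
      = ennreal K * (ennreal (x powr (s - 1) / exp x) * indicator {0..} x)" for x
  proof (cases "x > 0")
    case True
    have "gamma_density a b (x / b) * (x / b) ^ i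
        = b powr a / Gamma a * ((x / b) powr (a - 1) * (x / b) powr real i) * exp (- x)"
      using True b by (simp add: gamma_density_def powr_realpow)
    also have "(x / b) powr (a - 1) * (x / b) powr real i = x powr (s - 1) / b powr (s - 1)"
      using True b by (simp add: powr_add[symmetric] powr_divide s_def algebra_simps)
    also have "b powr a / Gamma a * (x powr (s - 1) / b powr (s - 1)) * exp (- x)
        = (b powr a / b powr (s - 1)) / Gamma a * (x powr (s - 1) / exp x)"
      by (simp add: exp_minus field_simps)
    also have "b powr a / b powr (s - 1) = b / b ^ i"
      using b by (simp add: powr_diff s_def powr_realpow[symmetric] powr_add)
    finally show ?thesis using True K
      by (simp add: K_def ennreal_mult'[symmetric] field_simps)
  next
    case False
    then have "\<not> 0 < x / b" using b by (simp add: zero_less_divide_iff)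
    then show ?thesis using False b by (auto simp: gamma_density_def indicator_def)
  qed
  have "(\<integral>\<^sup>+x. ennreal (gamma_density a b x * x ^ i) \<partial>lborel)
      = ennreal \<bar>1/b\<bar> * (\<integral>\<^sup>+x. ennreal (gamma_density a b (0 + (1/b) * x) * (0 + (1/b) * x) ^ i) \<partial>lborel)"
    by (rule nn_integral_real_affine) (use b in auto)
  also have "\<dots> = ennreal (1/b) * (ennreal K * ennreal (Gamma s))"
    unfolding scaled by (subst nn_integral_cmult) (use b in \<open>auto simp: Gamma_s\<close>)
  also have "\<dots> = ennreal (Gamma (a + i) / (Gamma a * b ^ i))"
    using b K by (simp add: ennreal_mult'[symmetric] K_def s_def)
  finally show ?thesis .
qed

lemma (in prob_space) gamma_distributed_moment:
  fixes a b :: real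
  assumes a: "a > 0" and b: "b > 0"
    and D: "distributed M lborel Y (\<lambda>x. ennreal (gamma_density a b x))"
  shows "has_bochner_integral M (\<lambda>x. Y x ^ i) (Gamma (a + i) / (Gamma a * b ^ i))"
proof (rule has_bochner_integral_nn_integral)
  show "AE x in M. 0 \<le> Y x ^ i"
    by (subst distributed_AE2[OF D]) (auto simp: gamma_density_def)
  have "0 \<le> gamma_density a b x" for x
    using a b by (simp add: gamma_density_def)
  then show "(\<integral>\<^sup>+ x. ennreal (Y x ^ i) \<partial>M) = ennreal (Gamma (a + i) / (Gamma a * b ^ i))"
    using nn_integral_gamma_density_power[OF a b, of i]
    by (subst distributed_nn_integral[symmetric, OF D]) (auto simp: ennreal_mult')
qed (use a b distributed_measurable[OF D] in auto)

lemma (in prob_space) gamma_distributed_AE_nonneg: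
  assumes "distributed M lborel Y (\<lambda>x. ennreal (gamma_density a b x))"
  shows "AE x in M. 0 \<le> Y x"
  by (subst distributed_AE2[OF assms]) (auto simp: gamma_density_def)

lemma (in prob_space) exponential_distributed_AE_nonneg:
  assumes "distributed M lborel Y (\<lambda>x. ennreal (exponential_density r x))"
  shows "AE x in M. 0 \<le> Y x"
  by (subst distributed_AE2[OF assms]) (auto simp: exponential_density_def erlang_density_def)

section \<open>A strong law of large numbers via second moments\<close>

lemma LIMSEQ_div_of_incseq_squares:
  fixes s :: "nat \<Rightarrow> real"
  assumes inc: "incseq s" and s0: "0 \<le> s 0"
    and lim: "(\<lambda>m. s (m^2) / real (m^2)) \<longlonglongrightarrow> \<mu>"
  shows "(\<lambda>n. s n / real n) \<longlonglongrightarrow> \<mu>"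
proof -
  have mono: "a \<le> b \<Longrightarrow> s a \<le> s b" for a b using inc by (simp add: incseq_def)
  have nonneg: "0 \<le> s n" for n using mono[of 0 n] s0 by simp
  have r: "filterlim floor_sqrt at_top sequentially"
    unfolding filterlim_at_top eventually_sequentially
    by (metis le_floor_sqrtI order.trans self_le_power zero_less_numeral)
  define lo where "lo m = s (m^2) / real (m^2) * (real m ^ 2 / real (Suc m) ^ 2)" for m
  define hi where "hi m = s ((Suc m)^2) / real ((Suc m)^2) * (real (Suc m) ^ 2 / real m ^ 2)" for m
  have "(\<lambda>m. real m ^ 2 / real (Suc m) ^ 2) \<longlonglongrightarrow> 1"
    using tendsto_power[OF LIMSEQ_n_over_Suc_n, of 2] by (simp add: power_divide)
  then have lo: "lo \<longlonglongrightarrow> \<mu>"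
    unfolding lo_def by (rule tendsto_eq_rhs[OF tendsto_mult[OF lim]]) simp
  have "(\<lambda>m. real (Suc m) ^ 2 / real m ^ 2) \<longlonglongrightarrow> 1"
    using tendsto_power[OF LIMSEQ_Suc_n_over_n, of 2] by (simp add: power_divide)
  then have hi: "hi \<longlonglongrightarrow> \<mu>"
    unfolding hi_def by (rule tendsto_eq_rhs[OF tendsto_mult[OF LIMSEQ_Suc[OF lim]]]) simp
  have bounds: "lo (floor_sqrt n) \<le> s n / real n \<and> s n / real n \<le> hi (floor_sqrt n)"
    if n: "n \<ge> 1" for n
  proof -
    define m where "m = floor_sqrt n"
    have m1: "m \<ge> 1" using n by (simp add: m_def Suc_le_eq)
    have a: "m^2 \<le> n" by (simp add: m_def)
    have b: "n < (Suc m)^2" by (simp add: m_def Suc_floor_sqrt_power2_gt)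
    have ra: "real m ^ 2 \<le> real n" using a by (metis of_nat_le_iff of_nat_power)
    have rb: "real n \<le> real (Suc m) ^ 2" using b by (metis less_imp_le of_nat_le_iff of_nat_power)
    have "lo m = s (m^2) / real (Suc m) ^ 2" using m1 by (simp add: lo_def)
    also have "\<dots> \<le> s n / real (Suc m) ^ 2" by (intro divide_right_mono mono a) simp
    also have "\<dots> \<le> s n / real n" using n rb nonneg[of n] by (intro divide_left_mono) auto
    finally have lower: "lo m \<le> s n / real n" .
    have "s n / real n \<le> s n / real m ^ 2"
      using n ra m1 nonneg[of n] by (intro divide_left_mono) auto
    also have "\<dots> \<le> s ((Suc m)^2) / real m ^ 2" by (intro divide_right_mono mono) (use b in auto)
    also have "\<dots> = hi m" by (simp add: hi_def)
    finally show ?thesis using lower by (simp add: m_def)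
  qed
  show ?thesis
  proof (rule tendsto_sandwich[OF _ _ filterlim_compose[OF lo r] filterlim_compose[OF hi r]])
    show "eventually (\<lambda>n. lo (floor_sqrt n) \<le> s n / real n) sequentially"
      using bounds by (auto simp: eventually_sequentially intro!: exI[of _ 1])
    show "eventually (\<lambda>n. s n / real n \<le> hi (floor_sqrt n)) sequentially"
      using bounds by (auto simp: eventually_sequentially intro!: exI[of _ 1])
  qed
qed

text \<open>Along \<open>n = (m+1)\<^sup>2\<close> the Chebyshev bounds \<open>C / (e\<^sup>2 n)\<close> are summable, so
  Borel-Cantelli applies.\<close>

lemma (in prob_space) AE_eventually_near_mean_along_squares:
  fixes S :: "nat \<Rightarrow> 'a \<Rightarrow> real"
  assumes [measurable]: "\<And>n. S n \<in> borel_measurable M"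
    and int: "\<And>n. integrable M (\<lambda>\<omega>. (S n \<omega> - real n * \<mu>)^2)"
    and var: "\<And>n. expectation (\<lambda>\<omega>. (S n \<omega> - real n * \<mu>)^2) \<le> C * real n"
    and e: "e > 0"
  shows "AE \<omega> in M. eventually (\<lambda>m. \<bar>S ((Suc m)^2) \<omega> / real ((Suc m)^2) - \<mu>\<bar> < e) sequentially"
proof -
  define A where "A m = {\<omega> \<in> space M. e * real ((Suc m)^2) \<le> \<bar>S ((Suc m)^2) \<omega> - real ((Suc m)^2) * \<mu>\<bar>}" for m
  have [measurable]: "A m \<in> sets M" for m unfolding A_def by measurable
  have Chebyshev: "measure M (A m) \<le> C / e^2 * inverse (real (Suc m) ^ 2)" for m
  proof -
    define n where "n = (Suc m)^2"
    have n: "real n > 0" by (simp add: n_def)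
    have "measure M (A m) \<le> expectation (\<lambda>\<omega>. (S n \<omega> - real n * \<mu>)^2) / (e * real n)^2"
      unfolding A_def n_def[symmetric]
      by (rule second_moment_method) (use int[of n] e n in auto)
    also have "\<dots> \<le> C * real n / (e * real n)^2"
      by (rule divide_right_mono) (use var[of n] in auto)
    also have "\<dots> = C / e^2 * inverse (real n)"
      using n e by (simp add: field_simps power2_eq_square)
    finally show ?thesis by (simp add: n_def)
  qed
  have "summable (\<lambda>m. C / e^2 * inverse (real (Suc m) ^ 2))"
    using inverse_power_summable[of 2, where 'a=real] by (subst summable_Suc_iff) simp
  then have "summable (\<lambda>m. measure M (A m))"
    by (rule summable_comparison_test[rotated]) (use Chebyshev in auto)
  then have "AE \<omega> in M. eventually (\<lambda>m. \<omega> \<in> space M - A m) sequentially"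
    by (intro borel_cantelli_AE1) (auto simp: emeasure_eq_measure)
  then show ?thesis
  proof (rule AE_mp[OF _ AE_I2], intro impI)
    fix \<omega> assume \<omega>: "\<omega> \<in> space M" and ev: "eventually (\<lambda>m. \<omega> \<in> space M - A m) sequentially"
    from ev show "eventually (\<lambda>m. \<bar>S ((Suc m)^2) \<omega> / real ((Suc m)^2) - \<mu>\<bar> < e) sequentially"
    proof (rule eventually_mono)
      fix m assume "\<omega> \<in> space M - A m"
      then have "\<bar>S ((Suc m)^2) \<omega> - real ((Suc m)^2) * \<mu>\<bar> < e * real ((Suc m)^2)"
        using \<omega> by (auto simp: A_def)
      moreover have "\<bar>S ((Suc m)^2) \<omega> / real ((Suc m)^2) - \<mu>\<bar>
          = \<bar>S ((Suc m)^2) \<omega> - real ((Suc m)^2) * \<mu>\<bar> / real ((Suc m)^2)"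
        by (simp add: field_simps del: of_nat_power of_nat_Suc)
      ultimately show "\<bar>S ((Suc m)^2) \<omega> / real ((Suc m)^2) - \<mu>\<bar> < e"
        by (simp add: divide_less_eq del: of_nat_power of_nat_Suc)
    qed
  qed
qed

lemma (in prob_space) AE_LIMSEQ_along_squares:
  fixes S :: "nat \<Rightarrow> 'a \<Rightarrow> real"
  assumes [measurable]: "\<And>n. S n \<in> borel_measurable M"
    and "\<And>n. integrable M (\<lambda>\<omega>. (S n \<omega> - real n * \<mu>)^2)"
    and "\<And>n. expectation (\<lambda>\<omega>. (S n \<omega> - real n * \<mu>)^2) \<le> C * real n"
  shows "AE \<omega> in M. (\<lambda>m. S (m^2) \<omega> / real (m^2)) \<longlonglongrightarrow> \<mu>"
proof -
  have "AE \<omega> in M. \<forall>r. eventually (\<lambda>m. \<bar>S ((Suc m)^2) \<omega> / real ((Suc m)^2) - \<mu>\<bar> < inverse (real (Suc r))) sequentially"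
    by (subst AE_all_countable) (intro allI AE_eventually_near_mean_along_squares[OF assms]; simp)
  then show ?thesis
  proof (rule AE_mp[OF _ AE_I2], intro impI)
    fix \<omega>
    assume near: "\<forall>r. eventually (\<lambda>m. \<bar>S ((Suc m)^2) \<omega> / real ((Suc m)^2) - \<mu>\<bar> < inverse (real (Suc r))) sequentially"
    have "(\<lambda>m. S ((Suc m)^2) \<omega> / real ((Suc m)^2)) \<longlonglongrightarrow> \<mu>"
      unfolding tendsto_iff dist_real_def
    proof (intro allI impI)
      fix x :: real assume "x > 0"
      then obtain r where "inverse (real (Suc r)) < x"
        using ex_inverse_of_nat_less[of x] by (metis Suc_pred)
      then show "eventually (\<lambda>m. \<bar>S ((Suc m)^2) \<omega> / real ((Suc m)^2) - \<mu>\<bar> < x) sequentially"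
        using near[rule_format, of r] by (auto elim: eventually_mono)
    qed
    then show "(\<lambda>m. S (m^2) \<omega> / real (m^2)) \<longlonglongrightarrow> \<mu>"
      by (rule LIMSEQ_imp_Suc)
  qed
qed

theorem (in prob_space) strong_law_nonneg_of_variance_bound:
  fixes Y :: "nat \<Rightarrow> 'a \<Rightarrow> real"
  assumes [measurable]: "\<And>k. Y k \<in> borel_measurable M"
    and nonneg: "AE \<omega> in M. \<forall>k. 0 \<le> Y k \<omega>"
    and "\<And>n. integrable M (\<lambda>\<omega>. ((\<Sum>k<n. Y k \<omega>) - real n * \<mu>)^2)"
    and "\<And>n. expectation (\<lambda>\<omega>. ((\<Sum>k<n. Y k \<omega>) - real n * \<mu>)^2) \<le> C * real n"
  shows "AE \<omega> in M. (\<lambda>n. (\<Sum>k<n. Y k \<omega>) / real n) \<longlonglongrightarrow> \<mu>"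
proof -
  have "AE \<omega> in M. (\<lambda>m. (\<Sum>k<m^2. Y k \<omega>) / real (m^2)) \<longlonglongrightarrow> \<mu>"
    by (rule AE_LIMSEQ_along_squares[OF _ assms(3,4)]) measurable
  with nonneg show ?thesis
  proof eventually_elim
  case (elim \<omega>)
  then have "incseq (\<lambda>n. \<Sum>k<n. Y k \<omega>)"
    by (intro incseq_SucI) simp
  with elim(2) show ?case
    by (intro LIMSEQ_div_of_incseq_squares) auto
  qed
qed

lemma integrable_mult_of_square_integrable:
  fixes f g :: "'a \<Rightarrow> real"
  assumes [measurable]: "f \<in> borel_measurable M" "g \<in> borel_measurable M"
    and "integrable M (\<lambda>\<omega>. f \<omega> ^ 2)" "integrable M (\<lambda>\<omega>. g \<omega> ^ 2)"
  shows "integrable M (\<lambda>\<omega>. f \<omega> * g \<omega>)"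
proof (rule Bochner_Integration.integrable_bound[OF Bochner_Integration.integrable_add[OF assms(3,4)]])
  show "AE \<omega> in M. norm (f \<omega> * g \<omega>) \<le> norm (f \<omega> ^ 2 + g \<omega> ^ 2)"
  proof (rule AE_I2)
    fix \<omega>
    have "\<bar>f \<omega> * g \<omega>\<bar> \<le> 2 * (\<bar>f \<omega>\<bar> * \<bar>g \<omega>\<bar>)"
      by (simp add: abs_mult)
    also have "\<dots> \<le> f \<omega> ^ 2 + g \<omega> ^ 2"
      using sum_squares_bound[of "\<bar>f \<omega>\<bar>" "\<bar>g \<omega>\<bar>"] by (simp add: mult.assoc)
    finally show "norm (f \<omega> * g \<omega>) \<le> norm (f \<omega> ^ 2 + g \<omega> ^ 2)"
      by simp
  qed
qed measurable

lemma (in prob_space) expectation_mult_le_mean_squares: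
  fixes f g :: "'a \<Rightarrow> real"
  assumes [measurable]: "f \<in> borel_measurable M" "g \<in> borel_measurable M"
    and f: "integrable M (\<lambda>\<omega>. f \<omega> ^ 2)" and g: "integrable M (\<lambda>\<omega>. g \<omega> ^ 2)"
  shows "expectation (\<lambda>\<omega>. f \<omega> * g \<omega>) \<le> (expectation (\<lambda>\<omega>. f \<omega> ^ 2) + expectation (\<lambda>\<omega>. g \<omega> ^ 2)) / 2"
proof -
  have "expectation (\<lambda>\<omega>. f \<omega> * g \<omega>) \<le> expectation (\<lambda>\<omega>. (f \<omega> ^ 2 + g \<omega> ^ 2) / 2)"
  proof (rule integral_mono)
    show "integrable M (\<lambda>\<omega>. f \<omega> * g \<omega>)"
      by (rule integrable_mult_of_square_integrable[OF _ _ f g]) simp_all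
    show "integrable M (\<lambda>\<omega>. (f \<omega> ^ 2 + g \<omega> ^ 2) / 2)" using f g by simp
    show "f \<omega> * g \<omega> \<le> (f \<omega> ^ 2 + g \<omega> ^ 2) / 2" for \<omega>
      using sum_squares_bound[of "f \<omega>" "g \<omega>"] by simp
  qed
  then show ?thesis using f g by simp
qed

lemma square_add_le:
  fixes u v :: real
  shows "(u + v)^2 \<le> 2 * (u^2 + v^2)"
  using sum_squares_bound[of u v] by (simp add: power2_sum)

lemma fourth_power_add_le:
  fixes u v :: real
  shows "(u + v)^4 \<le> 8 * (u^4 + v^4)"
proof -
  have "(u + v)^4 = ((u + v)^2)^2" by simp
  also have "\<dots> \<le> (2 * (u^2 + v^2))^2"
    by (intro power_mono square_add_le) simp
  also have "\<dots> = 4 * (u^2 + v^2)^2"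
    by (subst power_mult_distrib) simp
  also have "\<dots> \<le> 4 * (2 * ((u^2)^2 + (v^2)^2))"
    by (intro mult_left_mono square_add_le) simp
  finally show ?thesis by simp
qed

lemma affine_area_square_le:
  fixes a s :: real
  shows "(a * s + s^2 / 2)^2 \<le> 2 * (a^4 + s^4)"
proof -
  have "\<bar>a * s + s^2 / 2\<bar> \<le> \<bar>a\<bar> * \<bar>s\<bar> + s^2 / 2"
    using abs_triangle_ineq[of "a * s" "s^2 / 2"] by (simp add: abs_mult)
  also have "\<dots> \<le> a^2 + s^2"
  proof -
    have "2 * (\<bar>a\<bar> * \<bar>s\<bar>) \<le> a^2 + s^2"
      using sum_squares_bound[of "\<bar>a\<bar>" "\<bar>s\<bar>"] by (simp add: mult.assoc)
    then show ?thesis using zero_le_power2[of a] by linarith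
  qed
  finally have "\<bar>a * s + s^2 / 2\<bar>^2 \<le> (a^2 + s^2)^2"
    by (rule power_mono) simp
  then have "(a * s + s^2 / 2)^2 \<le> (a^2 + s^2)^2"
    by simp
  also have "\<dots> \<le> 2 * ((a^2)^2 + (s^2)^2)"
    by (rule square_add_le)
  finally show ?thesis by simp
qed

lemma sum_band_le:
  fixes B :: real and i n :: nat
  assumes "0 \<le> B"
  shows "(\<Sum>j<n. if i \<le> j + 1 \<and> j \<le> i + 1 then B else 0) \<le> 3 * B"
proof -
  let ?band = "{j\<in>{..<n}. i \<le> j + 1 \<and> j \<le> i + 1}"
  have "card ?band \<le> card {i - 1, i, i + 1}"
    by (intro card_mono) auto
  also have "\<dots> \<le> 3"
    by (simp add: card_insert_if)
  finally have "B * real (card ?band) \<le> B * 3"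
    using assms by (intro mult_left_mono) auto
  moreover have "(\<Sum>j<n. if i \<le> j + 1 \<and> j \<le> i + 1 then B else 0) = B * real (card ?band)"
    by (simp add: sum.If_cases Int_def conj_commute)
  ultimately show ?thesis by simp
qed

context prob_space
begin

context
  fixes Y :: "nat \<Rightarrow> 'a \<Rightarrow> real" and \<mu> B :: real
  assumes Y_measurable [measurable]: "\<And>k. Y k \<in> borel_measurable M"
    and Y_sq_integrable: "\<And>k. integrable M (\<lambda>\<omega>. Y k \<omega> ^ 2)"
    and Y_mean: "\<And>k. expectation (Y k) = \<mu>"
    and Y_sq_bound: "\<And>k. expectation (\<lambda>\<omega>. Y k \<omega> ^ 2) \<le> B"
    and Y_uncorrelated: "\<And>i j. i + 2 \<le> j \<Longrightarrow> expectation (\<lambda>\<omega>. Y i \<omega> * Y j \<omega>) = \<mu>^2"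
begin

lemma centered_mult_eq:
  "(\<lambda>\<omega>. (Y i \<omega> - \<mu>) * (Y j \<omega> - \<mu>)) = (\<lambda>\<omega>. Y i \<omega> * Y j \<omega> - \<mu> * Y i \<omega> - \<mu> * Y j \<omega> + \<mu>^2)"
  by (auto simp: fun_eq_iff algebra_simps power2_eq_square)

lemma integrable_mult_terms: "integrable M (\<lambda>\<omega>. Y i \<omega> * Y j \<omega>)"
  by (rule integrable_mult_of_square_integrable[OF _ _ Y_sq_integrable Y_sq_integrable]) simp_all

lemma integrable_centered_mult: "integrable M (\<lambda>\<omega>. (Y i \<omega> - \<mu>) * (Y j \<omega> - \<mu>))"
  using integrable_mult_terms square_integrable_imp_integrable[OF Y_measurable Y_sq_integrable]
  by (simp add: centered_mult_eq)

lemma expectation_centered_mult: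
  "expectation (\<lambda>\<omega>. (Y i \<omega> - \<mu>) * (Y j \<omega> - \<mu>)) = expectation (\<lambda>\<omega>. Y i \<omega> * Y j \<omega>) - \<mu>^2"
  using integrable_mult_terms square_integrable_imp_integrable[OF Y_measurable Y_sq_integrable]
  by (simp add: centered_mult_eq Y_mean prob_space power2_eq_square)

lemma expectation_centered_mult_le:
  "expectation (\<lambda>\<omega>. (Y i \<omega> - \<mu>) * (Y j \<omega> - \<mu>)) \<le> (if i \<le> j + 1 \<and> j \<le> i + 1 then B else 0)"
proof (cases "i \<le> j + 1 \<and> j \<le> i + 1")
  case True
  have "expectation (\<lambda>\<omega>. Y i \<omega> * Y j \<omega>)
      \<le> (expectation (\<lambda>\<omega>. Y i \<omega> ^ 2) + expectation (\<lambda>\<omega>. Y j \<omega> ^ 2)) / 2"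
    by (rule expectation_mult_le_mean_squares) (simp_all add: Y_sq_integrable)
  also have "\<dots> \<le> B"
    using Y_sq_bound[of i] Y_sq_bound[of j] by simp
  finally have "expectation (\<lambda>\<omega>. Y i \<omega> * Y j \<omega>) \<le> B" .
  then have "expectation (\<lambda>\<omega>. (Y i \<omega> - \<mu>) * (Y j \<omega> - \<mu>)) \<le> B"
    using expectation_centered_mult[of i j] zero_le_power2[of \<mu>] by linarith
  with True show ?thesis by simp
next
  case False
  then have "expectation (\<lambda>\<omega>. Y i \<omega> * Y j \<omega>) = \<mu>^2"
    using Y_uncorrelated[of i j] Y_uncorrelated[of j i] by (auto simp: mult.commute)
  then show ?thesis using False expectation_centered_mult[of i j] by auto
qed

lemma centered_sum_square_eq:
  "((\<Sum>k<n. Y k \<omega>) - real n * \<mu>)^2 = (\<Sum>i<n. \<Sum>j<n. (Y i \<omega> - \<mu>) * (Y j \<omega> - \<mu>))"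
proof -
  have "(\<Sum>k<n. Y k \<omega>) - real n * \<mu> = (\<Sum>k<n. Y k \<omega> - \<mu>)"
    by (simp add: sum_subtractf)
  then show ?thesis
    by (simp add: power2_eq_square sum_product)
qed

lemma integrable_centered_sum_square: "integrable M (\<lambda>\<omega>. ((\<Sum>k<n. Y k \<omega>) - real n * \<mu>)^2)"
  unfolding centered_sum_square_eq using integrable_centered_mult by auto

lemma expectation_centered_sum_square_le:
  "expectation (\<lambda>\<omega>. ((\<Sum>k<n. Y k \<omega>) - real n * \<mu>)^2) \<le> 3 * B * real n"
proof -
  have "0 \<le> expectation (\<lambda>\<omega>. Y 0 \<omega> ^ 2)"
    by (rule integral_nonneg_AE) simp
  then have B: "0 \<le> B" using Y_sq_bound[of 0] by linarith
  have "expectation (\<lambda>\<omega>. ((\<Sum>k<n. Y k \<omega>) - real n * \<mu>)^2)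
      = (\<Sum>i<n. \<Sum>j<n. expectation (\<lambda>\<omega>. (Y i \<omega> - \<mu>) * (Y j \<omega> - \<mu>)))"
    unfolding centered_sum_square_eq using integrable_centered_mult
    by (simp add: Bochner_Integration.integral_sum)
  also have "\<dots> \<le> (\<Sum>i<n. \<Sum>j<n. if i \<le> j + 1 \<and> j \<le> i + 1 then B else 0)"
    by (intro sum_mono expectation_centered_mult_le)
  also have "\<dots> \<le> (\<Sum>i<n. 3 * B)"
    by (intro sum_mono sum_band_le B)
  finally show ?thesis
    by (simp add: mult.commute)
qed

theorem strong_law_nonneg_lag_uncorrelated:
  assumes "AE \<omega> in M. \<forall>k. 0 \<le> Y k \<omega>"
  shows "AE \<omega> in M. (\<lambda>n. (\<Sum>k<n. Y k \<omega>) / real n) \<longlonglongrightarrow> \<mu>"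
  by (rule strong_law_nonneg_of_variance_bound[OF Y_measurable assms
        integrable_centered_sum_square expectation_centered_sum_square_le])

end

end

lemma (in prob_space) indep_vars_expectation_mult:
  fixes Z :: "'i \<Rightarrow> 'a \<Rightarrow> real" and f g :: "('i \<Rightarrow> real) \<Rightarrow> real"
  assumes ind: "indep_vars (\<lambda>_. borel) Z I" and AB: "A \<inter> B = {}" "A \<subseteq> I" "B \<subseteq> I"
    and f: "f \<in> borel_measurable (Pi\<^sub>M A (\<lambda>_. borel))" and g: "g \<in> borel_measurable (Pi\<^sub>M B (\<lambda>_. borel))"
    and F: "\<And>\<omega>. F \<omega> = f (\<lambda>i\<in>A. Z i \<omega>)" and G: "\<And>\<omega>. G \<omega> = g (\<lambda>i\<in>B. Z i \<omega>)"
    and "integrable M F" "integrable M G"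
  shows "expectation (\<lambda>\<omega>. F \<omega> * G \<omega>) = expectation F * expectation G"
proof -
  have "indep_var borel (f \<circ> (\<lambda>\<omega>. \<lambda>i\<in>A. Z i \<omega>)) borel (g \<circ> (\<lambda>\<omega>. \<lambda>i\<in>B. Z i \<omega>))"
    by (rule indep_var_compose[OF indep_var_restrict[OF ind AB] f g])
  moreover have "f \<circ> (\<lambda>\<omega>. \<lambda>i\<in>A. Z i \<omega>) = F" "g \<circ> (\<lambda>\<omega>. \<lambda>i\<in>B. Z i \<omega>) = G"
    by (simp_all add: fun_eq_iff F G)
  ultimately show ?thesis
    using indep_var_lebesgue_integral assms(9,10) by simp
qed

section \<open>The sample path of the age of information\<close>

text \<open>\<open>aoi_area x y c k\<close> is the paper's \<open>Q\<^sub>k\<^sub>+\<^sub>1\<close>: on \<open>[U\<^sub>k, U\<^sub>k\<^sub>+\<^sub>1)\<close> the age rises with slope 1 from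
  \<open>x k + c\<close> for the duration \<open>x (Suc k) + y (Suc k)\<close>.\<close>
definition aoi_area :: "(nat \<Rightarrow> real) \<Rightarrow> (nat \<Rightarrow> real) \<Rightarrow> real \<Rightarrow> nat \<Rightarrow> real" where
  "aoi_area x y c k = (x k + c) * (x (Suc k) + y (Suc k)) + (x (Suc k) + y (Suc k))^2 / 2"

lemma upd_time_0 [simp]: "upd_time x y 0 = 0"
  by (simp add: upd_time_def)

lemma upd_time_Suc: "upd_time x y (Suc k) = upd_time x y k + (x (Suc k) + y (Suc k))"
  by (simp add: upd_time_def add.commute)

lemma incseq_upd_time:
  assumes "\<And>k. 0 \<le> x (Suc k) + y (Suc k)"
  shows "incseq (upd_time x y)"
  by (rule incseq_SucI) (simp add: upd_time_Suc assms)

lemma aoi_eq: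
  assumes U: "incseq (upd_time x y)"
    and t: "upd_time x y j \<le> t" "t < upd_time x y (Suc j)"
  shows "aoi x y c t = x j + c + (t - upd_time x y j)"
proof -
  let ?U = "upd_time x y"
  have "(THE k. 1 \<le> k \<and> ?U (k - 1) \<le> t \<and> t < ?U k) = Suc j"
  proof (rule the_equality)
    show "1 \<le> Suc j \<and> ?U (Suc j - 1) \<le> t \<and> t < ?U (Suc j)" using t by simp
  next
    fix k assume k: "1 \<le> k \<and> ?U (k - 1) \<le> t \<and> t < ?U k"
    then obtain i where i: "k = Suc i" by (cases k) auto
    show "k = Suc j"
    proof (rule ccontr)
      assume "k \<noteq> Suc j"
      then consider "Suc i \<le> j" | "Suc j \<le> i" using i by linarith
      then show False
      proof cases
        case 1
        then have "?U (Suc i) \<le> ?U j" by (rule incseqD[OF U])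
        then show False using k t i by simp
      next
        case 2
        then have "?U (Suc j) \<le> ?U i" by (rule incseqD[OF U])
        then show False using k t i by simp
      qed
    qed
  qed
  then show ?thesis by (simp add: aoi_def)
qed

lemma has_integral_affine_slope_one:
  fixes a u s :: real
  assumes "0 \<le> s"
  shows "((\<lambda>t. a + (t - u)) has_integral (a * s + s^2 / 2)) {u..u + s}"
proof -
  define F where "F t = (a - u) * t + t^2 / 2" for t :: real
  have "((\<lambda>t. a + (t - u)) has_integral (F (u + s) - F u)) {u..u + s}"
  proof (rule fundamental_theorem_of_calculus)
    show "u \<le> u + s" using assms by simp
    fix t :: real
    show "(F has_vector_derivative a + (t - u)) (at t within {u..u + s})"
      unfolding F_def has_real_derivative_iff_has_vector_derivative[symmetric]
      by (rule derivative_eq_intros refl | simp)+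
  qed
  moreover have "F (u + s) - F u = a * s + s^2 / 2"
    by (simp add: F_def power2_eq_square algebra_simps)
  ultimately show ?thesis by simp
qed

lemma aoi_has_integral_within_update:
  assumes U: "incseq (upd_time x y)" and s: "0 \<le> s" "s \<le> x (Suc j) + y (Suc j)"
  shows "(aoi x y c has_integral ((x j + c) * s + s^2 / 2)) {upd_time x y j..upd_time x y j + s}"
proof (rule has_integral_spike_finite[OF _ _ has_integral_affine_slope_one[OF s(1)]])
  show "finite {upd_time x y j + s}" by simp
  fix t assume "t \<in> {upd_time x y j..upd_time x y j + s} - {upd_time x y j + s}"
  then have "upd_time x y j \<le> t" "t < upd_time x y (Suc j)"
    using s by (auto simp: upd_time_Suc)
  then show "aoi x y c t = x j + c + (t - upd_time x y j)"
    by (rule aoi_eq[OF U])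
qed

lemma aoi_has_integral_upd_time:
  assumes nonneg: "\<And>k. 0 \<le> x (Suc k) + y (Suc k)"
  shows "(aoi x y c has_integral (\<Sum>k<n. aoi_area x y c k)) {0..upd_time x y n}"
proof (induction n)
  case 0
  show ?case using has_integral_refl(1)[of "aoi x y c" 0] by simp
next
  case (Suc n)
  note U = incseq_upd_time[of x y, OF nonneg]
  have "(aoi x y c has_integral aoi_area x y c n) {upd_time x y n..upd_time x y (Suc n)}"
    using aoi_has_integral_within_update[OF U, where j = n and s = "x (Suc n) + y (Suc n)" and c = c] nonneg[of n]
    by (simp add: aoi_area_def upd_time_Suc)
  with Suc have "(aoi x y c has_integral (\<Sum>k<n. aoi_area x y c k) + aoi_area x y c n) {0..upd_time x y (Suc n)}"
    using incseqD[OF U, of 0 n] incseqD[OF U, of n "Suc n"] by (intro has_integral_combine) auto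
  then show ?case by simp
qed

lemma integral_aoi_bounds:
  assumes x: "\<And>k. 0 \<le> x k" and y: "\<And>k. 0 \<le> y (Suc k)" and c: "0 \<le> c"
    and t: "upd_time x y N \<le> t" "t < upd_time x y (Suc N)"
  shows "(\<Sum>k<N. aoi_area x y c k) \<le> integral {0..t} (aoi x y c)"
    and "integral {0..t} (aoi x y c) \<le> (\<Sum>k<Suc N. aoi_area x y c k)"
proof -
  have nonneg: "0 \<le> x (Suc k) + y (Suc k)" for k using x y by (simp add: add_nonneg_nonneg)
  note U = incseq_upd_time[of x y, OF nonneg]
  define s where "s = t - upd_time x y N"
  have s: "0 \<le> s" "s \<le> x (Suc N) + y (Suc N)" using t by (auto simp: s_def upd_time_Suc)
  have last: "(aoi x y c has_integral ((x N + c) * s + s^2 / 2)) {upd_time x y N..t}"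
    using aoi_has_integral_within_update[OF U s] by (simp add: s_def)
  have "(aoi x y c has_integral (\<Sum>k<N. aoi_area x y c k) + ((x N + c) * s + s^2 / 2)) {0..t}"
    by (rule has_integral_combine[OF _ _ aoi_has_integral_upd_time[of x y, OF nonneg] last])
       (use t incseqD[OF U, of 0 N] in auto)
  then have integral_eq: "integral {0..t} (aoi x y c) = (\<Sum>k<N. aoi_area x y c k) + ((x N + c) * s + s^2 / 2)"
    by (rule integral_unique)
  have "0 \<le> (x N + c) * s + s^2 / 2" using x[of N] c s by simp
  moreover have "(x N + c) * s + s^2 / 2 \<le> aoi_area x y c N"
    unfolding aoi_area_def using x[of N] c s
    by (intro add_mono mult_left_mono divide_right_mono power_mono) auto
  ultimately show "(\<Sum>k<N. aoi_area x y c k) \<le> integral {0..t} (aoi x y c)"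
    and "integral {0..t} (aoi x y c) \<le> (\<Sum>k<Suc N. aoi_area x y c k)"
    using integral_eq by simp_all
qed

section \<open>Renewal-reward limits\<close>

lemma LIMSEQ_Suc_div_real:
  fixes a :: "nat \<Rightarrow> real"
  assumes "(\<lambda>n. a n / real n) \<longlonglongrightarrow> p"
  shows "(\<lambda>n. a (Suc n) / real n) \<longlonglongrightarrow> p"
proof -
  have "(\<lambda>n. a (Suc n) / real (Suc n) * (real (Suc n) / real n)) \<longlonglongrightarrow> p"
    using tendsto_mult[OF LIMSEQ_Suc[OF assms] LIMSEQ_Suc_n_over_n] by simp
  moreover have "eventually (\<lambda>n. a (Suc n) / real (Suc n) * (real (Suc n) / real n) = a (Suc n) / real n) sequentially"
    using eventually_gt_at_top[of "0::nat"] by eventually_elim simp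
  ultimately show ?thesis by (rule Lim_transform_eventually)
qed

lemma LIMSEQ_div_of_div_real:
  fixes a b :: "nat \<Rightarrow> real"
  assumes "(\<lambda>n. a n / real n) \<longlonglongrightarrow> p" "(\<lambda>n. b n / real n) \<longlonglongrightarrow> r" "r \<noteq> 0"
  shows "(\<lambda>n. a n / b n) \<longlonglongrightarrow> p / r"
proof -
  have "(\<lambda>n. (a n / real n) / (b n / real n)) \<longlonglongrightarrow> p / r"
    by (rule tendsto_divide[OF assms])
  moreover have "eventually (\<lambda>n. (a n / real n) / (b n / real n) = a n / b n) sequentially"
    using eventually_gt_at_top[of "0::nat"] by eventually_elim simp
  ultimately show ?thesis by (rule Lim_transform_eventually)
qed

lemma filterlim_at_top_of_LIMSEQ_div_real:
  fixes U :: "nat \<Rightarrow> real"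
  assumes "(\<lambda>n. U n / real n) \<longlonglongrightarrow> m" "m > 0"
  shows "filterlim U at_top sequentially"
proof -
  have "filterlim (\<lambda>n. U n / real n * real n) at_top sequentially"
    by (rule filterlim_tendsto_pos_mult_at_top[OF assms filterlim_real_sequentially])
  moreover have "eventually (\<lambda>n. U n / real n * real n = U n) sequentially"
    using eventually_gt_at_top[of "0::nat"] by eventually_elim simp
  ultimately show ?thesis
    by (simp add: filterlim_cong)
qed

lemma incseq_bracketing_index:
  fixes U :: "nat \<Rightarrow> real"
  assumes U: "incseq U" and U_top: "filterlim U at_top sequentially"
  obtains N :: "real \<Rightarrow> nat"
  where "filterlim N at_top at_top" and "\<And>\<tau>. U 0 \<le> \<tau> \<Longrightarrow> U (N \<tau>) \<le> \<tau> \<and> \<tau> < U (Suc (N \<tau>))"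
proof
  define N where "N \<tau> = (SOME N. U N \<le> \<tau> \<and> \<tau> < U (Suc N))" for \<tau>
  show N: "U (N \<tau>) \<le> \<tau> \<and> \<tau> < U (Suc (N \<tau>))" if "U 0 \<le> \<tau>" for \<tau>
  proof -
    obtain n where "\<tau> < U n"
      using filterlim_at_top_dense[THEN iffD1, OF U_top, rule_format, of \<tau>]
      by (auto simp: eventually_sequentially)
    then have "\<exists>N. U N \<le> \<tau> \<and> \<tau> < U (Suc N)"
      using ex_least_nat_less[of "\<lambda>n. \<tau> < U n" n] that by (auto simp: not_less)
    then show ?thesis unfolding N_def by (rule someI_ex)
  qed
  show "filterlim N at_top at_top"
    unfolding filterlim_at_top
  proof
    fix K
    show "eventually (\<lambda>\<tau>. K \<le> N \<tau>) at_top"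
      using eventually_ge_at_top[of "U K"]
    proof eventually_elim
      case (elim \<tau>)
      have "U 0 \<le> U K" by (rule incseqD[OF U]) simp
      with elim have "\<tau> < U (Suc (N \<tau>))" using N by auto
      show ?case
      proof (rule ccontr)
        assume "\<not> K \<le> N \<tau>"
        then have "U (Suc (N \<tau>)) \<le> U K" by (intro incseqD[OF U]) simp
        with elim \<open>\<tau> < U (Suc (N \<tau>))\<close> show False by simp
      qed
    qed
  qed
qed

lemma renewal_reward_limit:
  fixes U S :: "nat \<Rightarrow> real" and F :: "real \<Rightarrow> real"
  assumes U: "incseq U" and S: "\<And>n. 0 \<le> S n"
    and lim_U: "(\<lambda>n. U n / real n) \<longlonglongrightarrow> m" and m: "m > 0"
    and lim_S: "(\<lambda>n. S n / real n) \<longlonglongrightarrow> q"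
    and bracket: "\<And>N \<tau>. U N \<le> \<tau> \<Longrightarrow> \<tau> < U (Suc N) \<Longrightarrow> S N \<le> F \<tau> \<and> F \<tau> \<le> S (Suc N)"
  shows "((\<lambda>\<tau>. F \<tau> / \<tau>) \<longlongrightarrow> q / m) at_top"
proof -
  have U_top: "filterlim U at_top sequentially"
    by (rule filterlim_at_top_of_LIMSEQ_div_real[OF lim_U m])
  obtain N :: "real \<Rightarrow> nat" where N_top: "filterlim N at_top at_top"
    and N: "\<And>\<tau>. U 0 \<le> \<tau> \<Longrightarrow> U (N \<tau>) \<le> \<tau> \<and> \<tau> < U (Suc (N \<tau>))"
    using incseq_bracketing_index[OF U U_top] by blast
  have lo: "(\<lambda>n. S n / U (Suc n)) \<longlonglongrightarrow> q / m"
    by (rule LIMSEQ_div_of_div_real[OF lim_S LIMSEQ_Suc_div_real[OF lim_U]]) (use m in auto)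
  have hi: "(\<lambda>n. S (Suc n) / U n) \<longlonglongrightarrow> q / m"
    by (rule LIMSEQ_div_of_div_real[OF LIMSEQ_Suc_div_real[OF lim_S] lim_U]) (use m in auto)
  have "eventually (\<lambda>n. 0 < U n) sequentially"
    using filterlim_at_top_dense[THEN iffD1, OF U_top] by blast
  then have U_pos: "eventually (\<lambda>\<tau>. 0 < U (N \<tau>)) at_top"
    by (rule eventually_compose_filterlim[OF _ N_top])
  show ?thesis
  proof (rule tendsto_sandwich[OF _ _ filterlim_compose[OF lo N_top] filterlim_compose[OF hi N_top]])
    show "eventually (\<lambda>\<tau>. S (N \<tau>) / U (Suc (N \<tau>)) \<le> F \<tau> / \<tau>) at_top"
      using U_pos eventually_ge_at_top[of "U 0"]
    proof eventually_elim
      case (elim \<tau>)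
      then have \<tau>: "U (N \<tau>) \<le> \<tau>" "\<tau> < U (Suc (N \<tau>))" using N by auto
      then have "0 < \<tau>" "S (N \<tau>) \<le> F \<tau>" using elim bracket by auto
      then have "S (N \<tau>) / U (Suc (N \<tau>)) \<le> S (N \<tau>) / \<tau>"
        using S \<tau>(2) by (intro divide_left_mono) auto
      also have "\<dots> \<le> F \<tau> / \<tau>"
        using \<open>0 < \<tau>\<close> \<open>S (N \<tau>) \<le> F \<tau>\<close> by (intro divide_right_mono) auto
      finally show ?case .
    qed
    show "eventually (\<lambda>\<tau>. F \<tau> / \<tau> \<le> S (Suc (N \<tau>)) / U (N \<tau>)) at_top"
      using U_pos eventually_ge_at_top[of "U 0"]
    proof eventually_elim
      case (elim \<tau>)
      then have \<tau>: "U (N \<tau>) \<le> \<tau>" "F \<tau> \<le> S (Suc (N \<tau>))" using N bracket by auto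
      then have "F \<tau> / \<tau> \<le> S (Suc (N \<tau>)) / \<tau>"
        using elim by (intro divide_right_mono) auto
      also have "\<dots> \<le> S (Suc (N \<tau>)) / U (N \<tau>)"
        using \<tau> elim S by (intro divide_left_mono) auto
      finally show ?case .
    qed
  qed
qed

lemma aoi_time_average_tendsto:
  assumes x: "\<And>k. 0 \<le> x k" and y: "\<And>k. 0 \<le> y (Suc k)" and c: "0 \<le> c"
    and lim_U: "(\<lambda>n. upd_time x y n / real n) \<longlonglongrightarrow> m" and m: "m > 0"
    and lim_S: "(\<lambda>n. (\<Sum>k<n. aoi_area x y c k) / real n) \<longlonglongrightarrow> q"
  shows "((\<lambda>\<tau>. (1 / \<tau>) * integral {0..\<tau>} (aoi x y c)) \<longlongrightarrow> q / m) at_top"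
proof -
  have "((\<lambda>\<tau>. integral {0..\<tau>} (aoi x y c) / \<tau>) \<longlongrightarrow> q / m) at_top"
  proof (rule renewal_reward_limit[OF _ _ lim_U m lim_S])
    show "incseq (upd_time x y)"
      using x y by (intro incseq_upd_time add_nonneg_nonneg)
    show "0 \<le> (\<Sum>k<n. aoi_area x y c k)" for n
      unfolding aoi_area_def using x y c by (intro sum_nonneg add_nonneg_nonneg mult_nonneg_nonneg) auto
  qed (use integral_aoi_bounds[of x y c, OF x y c] in blast)
  then show ?thesis by simp
qed

section \<open>The standing AoI model\<close>

locale aoi_model = prob_space M for M :: "'w measure" +
  fixes X Tint :: "nat \<Rightarrow> 'w \<Rightarrow> real" and \<alpha> \<beta> \<rho> Ttx :: real
  assumes \<alpha>_pos: "\<alpha> > 0" and \<beta>_pos: "\<beta> > 0" and \<rho>_pos: "\<rho> > 0" and Ttx_nonneg: "Ttx \<ge> 0"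
    and indep: "indep_vars (\<lambda>_. borel) (\<lambda>i. case i of Inl k \<Rightarrow> X k | Inr k \<Rightarrow> Tint k)
      (range Inl \<union> Inr ` {1..})"
    and X_distributed: "\<And>k. distributed M lborel (X k) (\<lambda>x. ennreal (gamma_density \<alpha> \<beta> x))"
    and Tint_distributed:
      "\<And>k. k \<ge> 1 \<Longrightarrow> distributed M lborel (Tint k) (\<lambda>x. ennreal (exponential_density \<rho> x))"
begin

text \<open>Indices are shifted by one with respect to the paper: \<open>inter_update k\<close> and \<open>area k\<close> are
  \<open>T\<^sub>k\<^sub>+\<^sub>1\<close> and \<open>Q\<^sub>k\<^sub>+\<^sub>1\<close>, so that the strong law is applied to sums over \<open>k < n\<close>.\<close>

definition inter_update :: "nat \<Rightarrow> 'w \<Rightarrow> real" where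
  "inter_update k \<omega> = X (Suc k) \<omega> + Tint (Suc k) \<omega>"

definition area :: "nat \<Rightarrow> 'w \<Rightarrow> real" where
  "area k \<omega> = aoi_area (\<lambda>j. X j \<omega>) (\<lambda>j. Tint j \<omega>) Ttx k"

definition mean_inter_update :: real where
  "mean_inter_update = \<alpha> / \<beta> + 1 / \<rho>"

definition mean_sq_inter_update :: real where
  "mean_sq_inter_update = \<alpha> * (\<alpha> + 1) / \<beta>^2 + 2 * (\<alpha> / \<beta> * (1 / \<rho>)) + 2 / \<rho>^2"

definition mean_area :: real where
  "mean_area = (\<alpha> / \<beta> + Ttx) * mean_inter_update + mean_sq_inter_update / 2"

lemma area_eq: "area k \<omega> = (X k \<omega> + Ttx) * inter_update k \<omega> + inter_update k \<omega> ^ 2 / 2"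
  by (simp add: area_def aoi_area_def inter_update_def)

lemma X_measurable [measurable]: "X k \<in> borel_measurable M"
  using distributed_measurable[OF X_distributed[of k]] by simp

lemma Tint_Suc_measurable [measurable]: "Tint (Suc k) \<in> borel_measurable M"
  using distributed_measurable[OF Tint_distributed[of "Suc k"]] by simp

lemma inter_update_measurable [measurable]: "inter_update k \<in> borel_measurable M"
  unfolding inter_update_def by measurable

lemma area_measurable [measurable]: "area k \<in> borel_measurable M"
  unfolding area_eq[abs_def] by measurable

lemma X_power_has_integral:
  "has_bochner_integral M (\<lambda>\<omega>. X k \<omega> ^ i) (Gamma (\<alpha> + i) / (Gamma \<alpha> * \<beta> ^ i))"
  by (rule gamma_distributed_moment[OF \<alpha>_pos \<beta>_pos X_distributed])

lemma Tint_power_has_integral: "has_bochner_integral M (\<lambda>\<omega>. Tint (Suc k) \<omega> ^ i) (fact i / \<rho> ^ i)"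
  using has_bochner_integral_erlang_ith_moment[OF \<rho>_pos Tint_distributed[of "Suc k"], of i] by simp

lemma integrable_X_power [simp]: "integrable M (\<lambda>\<omega>. X k \<omega> ^ i)"
  using X_power_has_integral by (auto simp: has_bochner_integral_iff)

lemma integrable_Tint_power [simp]: "integrable M (\<lambda>\<omega>. Tint (Suc k) \<omega> ^ i)"
  using Tint_power_has_integral by (auto simp: has_bochner_integral_iff)

lemma integrable_X [simp]: "integrable M (X k)"
  using integrable_X_power[of k 1] by simp

lemma integrable_Tint [simp]: "integrable M (Tint (Suc k))"
  using integrable_Tint_power[of k 1] by simp

lemma expectation_X: "expectation (X k) = \<alpha> / \<beta>"
proof -
  have "Gamma (\<alpha> + 1) = \<alpha> * Gamma \<alpha>"
    using \<alpha>_pos by (intro Gamma_plus1) auto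
  then show ?thesis
    using has_bochner_integral_integral_eq[OF X_power_has_integral[of k 1]] Gamma_real_pos[OF \<alpha>_pos]
    by simp
qed

lemma expectation_X_sq: "expectation (\<lambda>\<omega>. X k \<omega> ^ 2) = \<alpha> * (\<alpha> + 1) / \<beta>^2"
proof -
  have "Gamma (\<alpha> + 2) = Gamma ((\<alpha> + 1) + 1)" by (simp add: add.assoc)
  also have "\<dots> = (\<alpha> + 1) * Gamma (\<alpha> + 1)"
    using \<alpha>_pos by (intro Gamma_plus1) auto
  also have "Gamma (\<alpha> + 1) = \<alpha> * Gamma \<alpha>"
    using \<alpha>_pos by (intro Gamma_plus1) auto
  finally show ?thesis
    using has_bochner_integral_integral_eq[OF X_power_has_integral[of k 2]] Gamma_real_pos[OF \<alpha>_pos]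
    by simp
qed

lemma expectation_Tint: "expectation (Tint (Suc k)) = 1 / \<rho>"
  using has_bochner_integral_integral_eq[OF Tint_power_has_integral[of k 1]] by simp

lemma expectation_Tint_sq: "expectation (\<lambda>\<omega>. Tint (Suc k) \<omega> ^ 2) = 2 / \<rho>^2"
  using has_bochner_integral_integral_eq[OF Tint_power_has_integral[of k 2]] by simp

lemma AE_X_nonneg: "AE \<omega> in M. \<forall>k. 0 \<le> X k \<omega>"
  by (subst AE_all_countable) (auto intro: gamma_distributed_AE_nonneg[OF X_distributed])

lemma AE_Tint_nonneg: "AE \<omega> in M. \<forall>k. 0 \<le> Tint (Suc k) \<omega>"
  by (subst AE_all_countable) (auto intro: exponential_distributed_AE_nonneg[OF Tint_distributed])

lemma expectation_X_Tint:
  "expectation (\<lambda>\<omega>. X (Suc k) \<omega> * Tint (Suc k) \<omega>) = \<alpha> / \<beta> * (1 / \<rho>)"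
proof -
  have "expectation (\<lambda>\<omega>. X (Suc k) \<omega> * Tint (Suc k) \<omega>)
      = expectation (X (Suc k)) * expectation (Tint (Suc k))"
    by (rule indep_vars_expectation_mult[OF indep, where A = "{Inl (Suc k)}" and B = "{Inr (Suc k)}"
          and f = "\<lambda>v. v (Inl (Suc k))" and g = "\<lambda>v. v (Inr (Suc k))"]) auto
  then show ?thesis by (simp add: expectation_X expectation_Tint)
qed

lemma integrable_total_latency_mult:
  assumes "integrable M (\<lambda>\<omega>. f \<omega> ^ 2)" and [measurable]: "f \<in> borel_measurable M"
  shows "integrable M (\<lambda>\<omega>. (X k \<omega> + Ttx) * f \<omega>)"
proof (rule integrable_mult_of_square_integrable[OF _ _ _ assms(1)])
  have "(\<lambda>\<omega>. (X k \<omega> + Ttx) ^ 2) = (\<lambda>\<omega>. X k \<omega> ^ 2 + 2 * Ttx * X k \<omega> + Ttx ^ 2)"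
    by (auto simp: power2_eq_square algebra_simps)
  then show "integrable M (\<lambda>\<omega>. (X k \<omega> + Ttx) ^ 2)" by simp
qed measurable

lemma inter_update_sq_eq:
  "(\<lambda>\<omega>. inter_update k \<omega> ^ 2)
    = (\<lambda>\<omega>. X (Suc k) \<omega> ^ 2 + 2 * (X (Suc k) \<omega> * Tint (Suc k) \<omega>) + Tint (Suc k) \<omega> ^ 2)"
  by (auto simp: inter_update_def power2_eq_square algebra_simps)

lemma integrable_X_Tint [simp]: "integrable M (\<lambda>\<omega>. X j \<omega> * Tint (Suc k) \<omega>)"
  by (rule integrable_mult_of_square_integrable) simp_all

lemma integrable_inter_update [simp]: "integrable M (inter_update k)"
  by (simp add: inter_update_def[abs_def])

lemma integrable_inter_update_sq [simp]: "integrable M (\<lambda>\<omega>. inter_update k \<omega> ^ 2)"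
  by (simp add: inter_update_sq_eq)

lemma expectation_inter_update: "expectation (inter_update k) = mean_inter_update"
  by (simp add: inter_update_def[abs_def] expectation_X expectation_Tint mean_inter_update_def)

lemma expectation_inter_update_sq: "expectation (\<lambda>\<omega>. inter_update k \<omega> ^ 2) = mean_sq_inter_update"
  by (simp add: inter_update_sq_eq expectation_X_sq expectation_X_Tint expectation_Tint_sq
      mean_sq_inter_update_def)

lemma expectation_inter_update_mult:
  assumes "i < j"
  shows "expectation (\<lambda>\<omega>. inter_update i \<omega> * inter_update j \<omega>) = mean_inter_update^2"
proof -
  have "expectation (\<lambda>\<omega>. inter_update i \<omega> * inter_update j \<omega>)
      = expectation (inter_update i) * expectation (inter_update j)"
    by (rule indep_vars_expectation_mult[OF indep,
          where A = "{Inl (Suc i), Inr (Suc i)}" and B = "{Inl (Suc j), Inr (Suc j)}"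
          and f = "\<lambda>v. v (Inl (Suc i)) + v (Inr (Suc i))" and g = "\<lambda>v. v (Inl (Suc j)) + v (Inr (Suc j))"])
       (use assms in \<open>auto simp: inter_update_def\<close>)
  then show ?thesis by (simp add: expectation_inter_update power2_eq_square)
qed

lemma integrable_area [simp]: "integrable M (area k)"
  unfolding area_eq[abs_def] by (simp add: integrable_total_latency_mult)

lemma expectation_area: "expectation (area k) = mean_area"
proof -
  have "expectation (\<lambda>\<omega>. (X k \<omega> + Ttx) * inter_update k \<omega>)
      = expectation (\<lambda>\<omega>. X k \<omega> + Ttx) * expectation (inter_update k)"
    by (rule indep_vars_expectation_mult[OF indep,
          where A = "{Inl k}" and B = "{Inl (Suc k), Inr (Suc k)}"
          and f = "\<lambda>v. v (Inl k) + Ttx" and g = "\<lambda>v. v (Inl (Suc k)) + v (Inr (Suc k))"])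
       (auto simp: inter_update_def)
  then show ?thesis
    unfolding area_eq[abs_def]
    by (simp add: integrable_total_latency_mult expectation_X prob_space expectation_inter_update
        expectation_inter_update_sq mean_area_def)
qed

lemma area_square_le:
  "area k \<omega> ^ 2 \<le> 16 * (X k \<omega> ^ 4 + Ttx ^ 4 + X (Suc k) \<omega> ^ 4 + Tint (Suc k) \<omega> ^ 4)"
proof -
  have "area k \<omega> ^ 2 \<le> 2 * ((X k \<omega> + Ttx) ^ 4 + (X (Suc k) \<omega> + Tint (Suc k) \<omega>) ^ 4)"
    unfolding area_eq inter_update_def by (rule affine_area_square_le)
  also have "\<dots> \<le> 2 * (8 * (X k \<omega> ^ 4 + Ttx ^ 4) + 8 * (X (Suc k) \<omega> ^ 4 + Tint (Suc k) \<omega> ^ 4))"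
    by (intro mult_left_mono add_mono fourth_power_add_le) simp
  finally show ?thesis by simp
qed

lemma integrable_area_sq [simp]: "integrable M (\<lambda>\<omega>. area k \<omega> ^ 2)"
proof (rule Bochner_Integration.integrable_bound)
  show "integrable M (\<lambda>\<omega>. 16 * (X k \<omega> ^ 4 + Ttx ^ 4 + X (Suc k) \<omega> ^ 4 + Tint (Suc k) \<omega> ^ 4))"
    by simp
  show "AE \<omega> in M. norm (area k \<omega> ^ 2)
      \<le> norm (16 * (X k \<omega> ^ 4 + Ttx ^ 4 + X (Suc k) \<omega> ^ 4 + Tint (Suc k) \<omega> ^ 4))"
    using area_square_le by (intro AE_I2) (simp add: add_nonneg_nonneg)
qed measurable

lemma expectation_area_sq_le:
  "expectation (\<lambda>\<omega>. area k \<omega> ^ 2)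
    \<le> 16 * (2 * (Gamma (\<alpha> + 4) / (Gamma \<alpha> * \<beta> ^ 4)) + Ttx ^ 4 + fact 4 / \<rho> ^ 4)"
proof -
  have "expectation (\<lambda>\<omega>. area k \<omega> ^ 2)
      \<le> expectation (\<lambda>\<omega>. 16 * (X k \<omega> ^ 4 + Ttx ^ 4 + X (Suc k) \<omega> ^ 4 + Tint (Suc k) \<omega> ^ 4))"
    by (intro integral_mono area_square_le) simp_all
  also have "\<dots> = 16 * (2 * (Gamma (\<alpha> + 4) / (Gamma \<alpha> * \<beta> ^ 4)) + Ttx ^ 4 + fact 4 / \<rho> ^ 4)"
    using has_bochner_integral_integral_eq[OF X_power_has_integral[of k 4]]
      has_bochner_integral_integral_eq[OF X_power_has_integral[of "Suc k" 4]]
      has_bochner_integral_integral_eq[OF Tint_power_has_integral[of k 4]]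
    by (simp add: prob_space)
  finally show ?thesis .
qed

text \<open>\<open>area i\<close> depends only on \<open>X i\<close>, \<open>X (Suc i)\<close> and \<open>Tint (Suc i)\<close>: areas at lag two or more are
  independent.\<close>

lemma expectation_area_mult:
  assumes "i + 2 \<le> j"
  shows "expectation (\<lambda>\<omega>. area i \<omega> * area j \<omega>) = mean_area^2"
proof -
  define f where "f k v = aoi_area (\<lambda>l. v (Inl l)) (\<lambda>l. v (Inr l)) Ttx k"
    for k and v :: "nat + nat \<Rightarrow> real"
  have f_measurable: "f k \<in> borel_measurable (Pi\<^sub>M {Inl k, Inl (Suc k), Inr (Suc k)} (\<lambda>_. borel))" for k
    unfolding f_def aoi_area_def by measurable
  have "expectation (\<lambda>\<omega>. area i \<omega> * area j \<omega>) = expectation (area i) * expectation (area j)"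
    by (rule indep_vars_expectation_mult[OF indep _ _ _ f_measurable f_measurable _ _ integrable_area integrable_area])
       (use assms in \<open>auto simp: f_def area_def aoi_area_def\<close>)
  then show ?thesis by (simp add: expectation_area power2_eq_square)
qed

lemma AE_inter_update_nonneg: "AE \<omega> in M. \<forall>k. 0 \<le> inter_update k \<omega>"
  using AE_X_nonneg AE_Tint_nonneg by eventually_elim (simp add: inter_update_def add_nonneg_nonneg)

lemma AE_area_nonneg: "AE \<omega> in M. \<forall>k. 0 \<le> area k \<omega>"
  using AE_X_nonneg AE_inter_update_nonneg
  by eventually_elim (simp add: area_eq Ttx_nonneg add_nonneg_nonneg)

lemma AE_LIMSEQ_upd_time:
  "AE \<omega> in M. (\<lambda>n. upd_time (\<lambda>k. X k \<omega>) (\<lambda>k. Tint k \<omega>) n / real n) \<longlonglongrightarrow> mean_inter_update"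
proof -
  have "upd_time (\<lambda>k. X k \<omega>) (\<lambda>k. Tint k \<omega>) n = (\<Sum>k<n. inter_update k \<omega>)" for n \<omega>
    unfolding upd_time_def inter_update_def by (subst sum_bounds_lt_plus1[symmetric]) simp
  moreover have "AE \<omega> in M. (\<lambda>n. (\<Sum>k<n. inter_update k \<omega>) / real n) \<longlonglongrightarrow> mean_inter_update"
    by (rule strong_law_nonneg_lag_uncorrelated[where B = mean_sq_inter_update, OF _ _ _ _ _ AE_inter_update_nonneg])
       (auto simp: expectation_inter_update expectation_inter_update_sq expectation_inter_update_mult)
  ultimately show ?thesis by simp
qed

lemma AE_LIMSEQ_area: "AE \<omega> in M. (\<lambda>n. (\<Sum>k<n. area k \<omega>) / real n) \<longlonglongrightarrow> mean_area"
  by (rule strong_law_nonneg_lag_uncorrelated[OF _ _ _ expectation_area_sq_le _ AE_area_nonneg])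
     (auto simp: expectation_area expectation_area_mult)

lemma mean_inter_update_pos: "mean_inter_update > 0"
  unfolding mean_inter_update_def using \<alpha>_pos \<beta>_pos \<rho>_pos by (intro add_pos_pos divide_pos_pos) auto

lemma mean_area_div_mean_inter_update: "mean_area / mean_inter_update = avg_aoi \<alpha> \<beta> \<rho> Ttx"
proof -
  define D where "D = \<alpha> * \<rho> + \<beta>"
  have D: "D > 0" using \<alpha>_pos \<beta>_pos \<rho>_pos by (simp add: D_def add_pos_pos)
  have mean_eq: "mean_inter_update = D / (\<beta> * \<rho>)"
    using \<beta>_pos \<rho>_pos by (simp add: mean_inter_update_def D_def field_simps)
  have "mean_area / mean_inter_update = \<alpha> / \<beta> + Ttx + mean_sq_inter_update / (2 * mean_inter_update)"
    using mean_inter_update_pos by (simp add: mean_area_def field_simps)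
  also have "mean_sq_inter_update / (2 * mean_inter_update) = \<rho> * \<beta> / (2 * D) * mean_sq_inter_update"
    using \<beta>_pos \<rho>_pos D by (simp add: mean_eq field_simps)
  also have "mean_sq_inter_update = 2 / \<rho>^2 + 2 * \<alpha> / (\<rho> * \<beta>) + (\<alpha>^2 + \<alpha>) / \<beta>^2"
    using \<beta>_pos \<rho>_pos by (simp add: mean_sq_inter_update_def field_simps power2_eq_square)
  finally show ?thesis
    by (simp add: avg_aoi_def D_def algebra_simps)
qed

theorem AE_time_average_aoi:
  "AE \<omega> in M. ((\<lambda>\<tau>. (1 / \<tau>) * integral {0..\<tau>} (aoi (\<lambda>k. X k \<omega>) (\<lambda>k. Tint k \<omega>) Ttx))
      \<longlongrightarrow> avg_aoi \<alpha> \<beta> \<rho> Ttx) at_top"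
  using AE_X_nonneg AE_Tint_nonneg AE_LIMSEQ_upd_time AE_LIMSEQ_area
proof eventually_elim
  case (elim \<omega>)
  have "((\<lambda>\<tau>. (1 / \<tau>) * integral {0..\<tau>} (aoi (\<lambda>k. X k \<omega>) (\<lambda>k. Tint k \<omega>) Ttx))
      \<longlongrightarrow> mean_area / mean_inter_update) at_top"
    by (rule aoi_time_average_tendsto)
       (use elim Ttx_nonneg mean_inter_update_pos in \<open>auto simp: area_def\<close>)
  then show ?case by (simp add: mean_area_div_mean_inter_update)
qed

theorem avg_aoi_eq_expectation_ratio:
  assumes "k \<ge> 1"
  shows "avg_aoi \<alpha> \<beta> \<rho> Ttx
    = expectation (\<lambda>\<omega>. (peak_aoi (\<lambda>j. X j \<omega>) (\<lambda>j. Tint j \<omega>) Ttx k ^ 2 - (X (k - 1) \<omega> + Ttx) ^ 2) / 2)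
      / expectation (\<lambda>\<omega>. X k \<omega> + Tint k \<omega>)"
proof -
  obtain j where k: "k = Suc j" using assms by (cases k) auto
  have "(\<lambda>\<omega>. (peak_aoi (\<lambda>j. X j \<omega>) (\<lambda>j. Tint j \<omega>) Ttx k ^ 2 - (X (k - 1) \<omega> + Ttx) ^ 2) / 2) = area j"
    by (auto simp: fun_eq_iff k peak_aoi_def area_eq inter_update_def power2_eq_square algebra_simps)
  moreover have "(\<lambda>\<omega>. X k \<omega> + Tint k \<omega>) = inter_update j"
    by (simp add: fun_eq_iff k inter_update_def)
  ultimately show ?thesis
    by (simp add: expectation_area expectation_inter_update mean_area_div_mean_inter_update)
qed

end

theorem lemma1:
  fixes M :: "'w measure" and X Tint :: "nat \<Rightarrow> 'w \<Rightarrow> real"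
    and \<alpha> \<beta> \<rho> Ttx :: real
  assumes "prob_space M"
    and "\<alpha> > 0" "\<beta> > 0" "\<rho> > 0" "Ttx \<ge> 0"
    and "prob_space.indep_vars M (\<lambda>_. borel)
           (\<lambda>i. case i of Inl k \<Rightarrow> X k | Inr k \<Rightarrow> Tint k) (range Inl \<union> Inr ` {1..})"
    and "\<And>k. distributed M lborel (X k) (\<lambda>x. ennreal (gamma_density \<alpha> \<beta> x))"
    and "\<And>k. k \<ge> 1 \<Longrightarrow> distributed M lborel (Tint k) (\<lambda>x. ennreal (exponential_density \<rho> x))"
  shows "(AE \<omega> in M.
           ((\<lambda>\<tau>. (1 / \<tau>) * integral {0..\<tau>} (aoi (\<lambda>k. X k \<omega>) (\<lambda>k. Tint k \<omega>) Ttx))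
              \<longlongrightarrow> avg_aoi \<alpha> \<beta> \<rho> Ttx) at_top)
       \<and> (\<forall>k\<ge>1. avg_aoi \<alpha> \<beta> \<rho> Ttx =
            prob_space.expectation M
              (\<lambda>\<omega>. (peak_aoi (\<lambda>j. X j \<omega>) (\<lambda>j. Tint j \<omega>) Ttx k ^ 2
                     - (X (k - 1) \<omega> + Ttx) ^ 2) / 2)
            / prob_space.expectation M (\<lambda>\<omega>. X k \<omega> + Tint k \<omega>))"
proof -
  interpret aoi_model M X Tint \<alpha> \<beta> \<rho> Ttx
    using assms by (auto simp: aoi_model_def aoi_model_axioms_def)
  show ?thesis
    using AE_time_average_aoi avg_aoi_eq_expectation_ratio by blast
qed

end
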